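(* Let $P=(p_{i,j})_{i,j=1}^N$ be an irreducible stochastic matrix, let $(X_m)_{m\ge0}$ be the Markov chain with transition matrix $P$, and let $p^n_{i,j}$ and $s_n$ be the GTH elimination quantities. For $2\le n\le N$, let $\tau_n=\inf\{m\ge1: X_m\in\{1,\dots,n-1\}\}$. Define: - for $1\le i<n$, $r_{i,n}=\mathbb E_i\big[\#\{m: 1\le m<\tau_n,\ X_m=n\}\big]$, the expected number of visits to $n$ before returning to $\{1,\dots,n-1\}$, starting from $i$; - for $1\le j<n$, $g_{n,j}=\mathbb P_n(X_{\tau_n}=j)$, the probability that, starting from $n$, the first state visited in $\{1,\dots,n-1\}$ is $j$; - for $1\le n\le N$, $\psi_n=p^n_{n,n}$; in particular $\psi_1=p^1_{1,1}=1$. Then, for $2\le n\le N$ and $1\le i,j\le n-1$, $$r_{i,n}=\frac{p^n_{i,n}}{s_n},\qquad g_{n,j}=\frac{p^n_{n,j}}{s_n}.$$ Moreover, $$I-P=(I-R_U)(I-\Psi_D)(I-G_L),$$ where: - $R_U$ is the $N\times N$ strictly upper triangular matrix with $(i,n)$ entry $r_{i,n}$ for $i<n$; - $\Psi_D=\mathrm{diag}(\psi_1,\dots,\psi_N)$; - $G_L$ is the $N\times N$ strictly lower triangular matrix with $(n,j)$ entry $g_{n,j}$ for $j<n$.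
   Context: GTH elimination: set $p^N_{i,j}=p_{i,j}$ for $1\le i,j\le N$. For $n=N,N-1,\dots,2$, set $s_n=\sum_{k=1}^{n-1}p^n_{n,k}$ and $$p^{n-1}_{i,j}=p^n_{i,j}+\frac{p^n_{i,n}p^n_{n,j}}{s_n}\qquad\text{for }1\le i,j\le n-1.$$ Irreducibility of $P$ guarantees that $s_n>0$ for all $n$. $\mathbb E_i$ and $\mathbb P_i$ denote expectation and probability for the chain started at $X_0=i$. *)

theory Defs
  imports Complex_Main
begin

text \<open>States are 1..N; a matrix is a function nat \<Rightarrow> nat \<Rightarrow> real, only entries
  with indices in {1..N} matter.\<close>

definition stochastic_matrix :: "nat \<Rightarrow> (nat \<Rightarrow> nat \<Rightarrow> real) \<Rightarrow> bool" where
  "stochastic_matrix N P \<longleftrightarrow>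
     (\<forall>i\<in>{1..N}. \<forall>j\<in>{1..N}. P i j \<ge> 0) \<and> (\<forall>i\<in>{1..N}. (\<Sum>j=1..N. P i j) = 1)"

definition irreducible_matrix :: "nat \<Rightarrow> (nat \<Rightarrow> nat \<Rightarrow> real) \<Rightarrow> bool" where
  "irreducible_matrix N P \<longleftrightarrow>
     (\<forall>i\<in>{1..N}. \<forall>j\<in>{1..N}.
        (i, j) \<in> {(a, b). a \<in> {1..N} \<and> b \<in> {1..N} \<and> P a b > 0}\<^sup>+)"

definition gth_step :: "nat \<Rightarrow> (nat \<Rightarrow> nat \<Rightarrow> real) \<Rightarrow> nat \<Rightarrow> nat \<Rightarrow> real" where
  "gth_step n q = (\<lambda>i j. q i j + q i n * q n j / (\<Sum>k=1..<n. q n k))"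

primrec gth_iter :: "(nat \<Rightarrow> nat \<Rightarrow> real) \<Rightarrow> nat \<Rightarrow> nat \<Rightarrow> nat \<Rightarrow> nat \<Rightarrow> real" where
  "gth_iter P N 0 = P"
| "gth_iter P N (Suc k) = gth_step (N - k) (gth_iter P N k)"

text \<open>gth P N n i j = p^n_{i,j} (for 1 \<le> n \<le> N).\<close>
definition gth :: "(nat \<Rightarrow> nat \<Rightarrow> real) \<Rightarrow> nat \<Rightarrow> nat \<Rightarrow> nat \<Rightarrow> nat \<Rightarrow> real" where
  "gth P N n = gth_iter P N (N - n)"

definition gth_s :: "(nat \<Rightarrow> nat \<Rightarrow> real) \<Rightarrow> nat \<Rightarrow> nat \<Rightarrow> real" where
  "gth_s P N n = (\<Sum>k=1..<n. gth P N n n k)"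

text \<open>Markov chain started at i: P_i(X_1 = x_1, ..., X_m = x_m) = p_{i,x_1} ... p_{x_{m-1},x_m}.\<close>
fun path_prob :: "(nat \<Rightarrow> nat \<Rightarrow> real) \<Rightarrow> nat \<Rightarrow> nat list \<Rightarrow> real" where
  "path_prob P i [] = 1"
| "path_prob P i (x # xs) = P i x * path_prob P x xs"

text \<open>Probability P_i(X_m = n and m < tau_n), i.e. X_1..X_m avoid {1..n-1} and X_m = n.\<close>
definition visit_prob :: "nat \<Rightarrow> (nat \<Rightarrow> nat \<Rightarrow> real) \<Rightarrow> nat \<Rightarrow> nat \<Rightarrow> nat \<Rightarrow> real" where
  "visit_prob N P n i m =
     (\<Sum>xs\<in>{xs. length xs = m \<and> set xs \<subseteq> {1..N} \<and> set xs \<inter> {1..<n} = {} \<and> last xs = n}.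
        path_prob P i xs)"

text \<open>r_{i,n} = E_i[#{m : 1 \<le> m < tau_n, X_m = n}] = sum_{m\<ge>1} P_i(X_m = n, m < tau_n).\<close>
definition r_visits :: "nat \<Rightarrow> (nat \<Rightarrow> nat \<Rightarrow> real) \<Rightarrow> nat \<Rightarrow> nat \<Rightarrow> real" where
  "r_visits N P i n = (\<Sum>m. visit_prob N P n i (Suc m))"

text \<open>Probability P_n(tau_n = m, X_m = j).\<close>
definition exit_prob :: "nat \<Rightarrow> (nat \<Rightarrow> nat \<Rightarrow> real) \<Rightarrow> nat \<Rightarrow> nat \<Rightarrow> nat \<Rightarrow> real" where
  "exit_prob N P n j m =
     (\<Sum>xs\<in>{xs. length xs = m \<and> set xs \<subseteq> {1..N} \<and> set (butlast xs) \<inter> {1..<n} = {} \<and> last xs = j}.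
        path_prob P n xs)"

text \<open>g_{n,j} = P_n(X_{tau_n} = j) = sum_{m\<ge>1} P_n(tau_n = m, X_m = j).\<close>
definition g_exit :: "nat \<Rightarrow> (nat \<Rightarrow> nat \<Rightarrow> real) \<Rightarrow> nat \<Rightarrow> nat \<Rightarrow> real" where
  "g_exit N P n j = (\<Sum>m. exit_prob N P n j (Suc m))"

definition idm :: "nat \<Rightarrow> nat \<Rightarrow> real" where
  "idm i j = (if i = j then 1 else 0)"

definition R_U :: "nat \<Rightarrow> (nat \<Rightarrow> nat \<Rightarrow> real) \<Rightarrow> nat \<Rightarrow> nat \<Rightarrow> real" where
  "R_U N P i n = (if i < n then r_visits N P i n else 0)"

definition Psi_D :: "nat \<Rightarrow> (nat \<Rightarrow> nat \<Rightarrow> real) \<Rightarrow> nat \<Rightarrow> nat \<Rightarrow> real" where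
  "Psi_D N P i j = (if i = j then gth P N i i i else 0)"

definition G_L :: "nat \<Rightarrow> (nat \<Rightarrow> nat \<Rightarrow> real) \<Rightarrow> nat \<Rightarrow> nat \<Rightarrow> real" where
  "G_L N P n j = (if j < n then g_exit N P n j else 0)"

definition matmul :: "nat \<Rightarrow> (nat \<Rightarrow> nat \<Rightarrow> real) \<Rightarrow> (nat \<Rightarrow> nat \<Rightarrow> real) \<Rightarrow> nat \<Rightarrow> nat \<Rightarrow> real" where
  "matmul N A B = (\<lambda>i j. \<Sum>k=1..N. A i k * B k j)"

end

theory Submission
  imports Defs
begin

text \<open>Read p^n_{i,j} as the total weight of the walks from i to j whose interior stays in
  {n+1, ..., N}. Admitting n into the interior is a first-passage decomposition: a walk either
  avoids n, or runs to its first visit of n, makes excursions from n back to n, and leaves n.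
  The excursions have total weight p^n_{n,n} = 1 - s_n (the rows of P^n sum to one), so the
  renewal series gives exactly the GTH update; for i = n or j = n it reduces to
  p^{n-1}_{i,n} = p^n_{i,n} / s_n and p^{n-1}_{n,j} = p^n_{n,j} / s_n, which are r_{i,n} and
  g_{n,j}. Irreducibility gives s_n > 0, hence convergence. Entry (i,j) of
  (I - R_U)(I - \<Psi>_D)(I - G_L) is delta_{i,j} - p^m_{i,j} + sum_{k > m} p^k_{i,k} p^k_{k,j} / s_k
  with m = max i j, which telescopes along the GTH recursion to delta_{i,j} - p_{i,j}.\<close>

lemma sum_convolution_le_product:
  fixes a b :: "nat \<Rightarrow> real"
  assumes "\<And>k. 0 \<le> a k" "\<And>k. 0 \<le> b k"
  shows "(\<Sum>k<M. \<Sum>t\<le>k. a t * b (k - t)) \<le> (\<Sum>t<M. a t) * (\<Sum>s<M. b s)"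
proof -
  have "(\<Sum>k<M. \<Sum>t\<le>k. a t * b (k - t)) = (\<Sum>(t,s)\<in>{(t,s). t+s < M}. a t * b s)"
    by (rule sum.triangle_reindex[symmetric])
  also have "\<dots> \<le> (\<Sum>(t,s)\<in>{..<M}\<times>{..<M}. a t * b s)"
    by (rule sum_mono2) (auto simp: assms)
  also have "\<dots> = (\<Sum>t<M. a t) * (\<Sum>s<M. b s)"
    by (simp add: sum_product sum.cartesian_product)
  finally show ?thesis .
qed

lemma renewal_summable:
  fixes a b x :: "nat \<Rightarrow> real"
  assumes a0: "\<And>k. 0 \<le> a k" and b0: "\<And>k. 0 \<le> b k" and x0: "\<And>k. 0 \<le> x k"
    and a_sums: "a sums c" and c_less: "c < 1" and x_summable: "summable x"
    and b_0: "b 0 = x 0" and b_Suc: "\<And>k. b (Suc k) = x (Suc k) + (\<Sum>t\<le>k. a t * b (k - t))"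
  shows "summable b"
proof (rule summableI_nonneg_bounded[where x="suminf x / (1 - c)"])
  show "0 \<le> b n" for n by (rule b0)
  have partial_a: "(\<Sum>t<M. a t) \<le> c" for M
    using a_sums by (metis a0 sum_le_suminf sums_iff finite_lessThan)
  have step: "(\<Sum>k<Suc M. b k) \<le> suminf x + c * (\<Sum>k<M. b k)" for M
  proof -
    have "(\<Sum>k<Suc M. b k) = (\<Sum>k<Suc M. x k) + (\<Sum>k<M. \<Sum>t\<le>k. a t * b (k - t))"
      by (simp add: b_0 b_Suc sum.distrib sum.lessThan_Suc_shift del: sum.lessThan_Suc)
    also have "\<dots> \<le> suminf x + (\<Sum>t<M. a t) * (\<Sum>s<M. b s)"
      by (intro add_mono sum_convolution_le_product sum_le_suminf x_summable) (auto simp: a0 b0 x0)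
    also have "\<dots> \<le> suminf x + c * (\<Sum>s<M. b s)"
      using partial_a by (intro add_left_mono mult_right_mono sum_nonneg) (auto simp: b0)
    finally show ?thesis .
  qed
  show "(\<Sum>k<M. b k) \<le> suminf x / (1 - c)" for M
  proof -
    have "(\<Sum>k<M. b k) \<le> (\<Sum>k<Suc M. b k)" by (simp add: b0)
    also have "\<dots> \<le> suminf x + c * (\<Sum>k<M. b k)" by (rule step)
    finally have "(1 - c) * (\<Sum>k<M. b k) \<le> suminf x" by (simp add: algebra_simps)
    then show ?thesis using c_less by (simp add: field_simps)
  qed
qed

lemma renewal_sums:
  fixes a b x y :: "nat \<Rightarrow> real"
  assumes a0: "\<And>k. 0 \<le> a k" and b0: "\<And>k. 0 \<le> b k"
    and a_sums: "a sums \<alpha>" and b_sums: "b sums \<beta>" and x_sums: "x sums \<xi>"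
    and y_0: "y 0 = x 0" and y_Suc: "\<And>k. y (Suc k) = x (Suc k) + (\<Sum>t\<le>k. a t * b (k - t))"
  shows "y sums (\<xi> + \<alpha> * \<beta>)"
proof -
  have "(\<lambda>k. \<Sum>i\<le>k. a i * b (k - i)) sums (\<alpha> * \<beta>)"
    using Cauchy_product_sums[of a b] a_sums b_sums a0 b0 by (auto simp: sums_iff)
  moreover have "(\<lambda>k. x (Suc k)) sums (\<xi> - x 0)" using x_sums by (simp add: sums_Suc_iff)
  ultimately have "(\<lambda>k. y (Suc k)) sums (\<xi> - x 0 + \<alpha> * \<beta>)"
    by (simp add: y_Suc sums_add)
  thus ?thesis by (simp add: sums_Suc_iff y_0)
qed

text \<open>Total weight of the walks of m steps from i to j whose interior states lie in A;
  there are no walks of 0 steps.\<close>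

fun walk_weight :: "(nat \<Rightarrow> nat \<Rightarrow> real) \<Rightarrow> nat set \<Rightarrow> nat \<Rightarrow> nat \<Rightarrow> nat \<Rightarrow> real" where
  "walk_weight P A i j 0 = 0"
| "walk_weight P A i j (Suc 0) = P i j"
| "walk_weight P A i j (Suc (Suc m)) = (\<Sum>x\<in>A. P i x * walk_weight P A x j (Suc m))"

lemma walk_weight_nonneg:
  assumes "\<forall>i\<in>S. \<forall>j\<in>S. 0 \<le> P i j" "A \<subseteq> S" "i \<in> S" "j \<in> S"
  shows "0 \<le> walk_weight P A i j m"
  using assms
proof (induction P A i j m rule: walk_weight.induct)
  case (3 P A i j m)
  then show ?case by (auto intro!: sum_nonneg mult_nonneg_nonneg)
qed auto

lemma set_eq_insert_last_butlast: "xs \<noteq> [] \<Longrightarrow> set xs = insert (last xs) (set (butlast xs))"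
  by (cases xs rule: rev_cases) auto

lemma sum_path_prob_eq_walk_weight:
  "(\<Sum>xs\<in>{xs. length xs = Suc m \<and> set (butlast xs) \<subseteq> A \<and> last xs = j}. path_prob P i xs)
     = walk_weight P A i j (Suc m)"
proof (induction m arbitrary: i)
  case 0
  have "{xs. length xs = Suc 0 \<and> set (butlast xs) \<subseteq> A \<and> last xs = j} = {[j]}"
    by (auto simp: length_Suc_conv)
  then show ?case by simp
next
  case (Suc m)
  define W where "W m = {xs. length xs = Suc m \<and> set (butlast xs) \<subseteq> A \<and> last xs = j}" for m
  have W_Suc: "W (Suc m) = (\<lambda>(x,ys). x#ys) ` (A \<times> W m)"
  proof (rule set_eqI, rule iffI)
    fix xs assume "xs \<in> W (Suc m)"
    then obtain x ys where xs: "xs = x # ys" and ys: "length ys = Suc m"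
      "set (butlast (x # ys)) \<subseteq> A" "last (x # ys) = j"
      unfolding W_def by (auto simp: length_Suc_conv)
    moreover have "ys \<noteq> []" using ys by auto
    ultimately show "xs \<in> (\<lambda>(x,ys). x#ys) ` (A \<times> W m)"
      unfolding W_def by (auto intro!: image_eqI[where x="(x,ys)"])
  next
    fix xs assume "xs \<in> (\<lambda>(x,ys). x#ys) ` (A \<times> W m)"
    then obtain x ys where "xs = x # ys" "x \<in> A" "ys \<in> W m" by auto
    moreover have "ys \<noteq> []" using \<open>ys \<in> W m\<close> by (auto simp: W_def)
    ultimately show "xs \<in> W (Suc m)" by (auto simp: W_def)
  qed
  have "(\<Sum>xs\<in>W (Suc m). path_prob P i xs) = (\<Sum>(x,ys)\<in>A \<times> W m. path_prob P i (x#ys))"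
    unfolding W_Suc by (subst sum.reindex) (auto simp: inj_on_def case_prod_unfold)
  also have "\<dots> = (\<Sum>x\<in>A. P i x * (\<Sum>ys\<in>W m. path_prob P x ys))"
    by (simp add: sum.cartesian_product[symmetric] sum_distrib_left)
  also have "\<dots> = walk_weight P A i j (Suc (Suc m))"
    using Suc by (simp add: W_def)
  finally show ?case by (simp add: W_def)
qed

text \<open>Decomposition at the first visit to n, which happens at step t + 1.\<close>

lemma walk_weight_insert:
  assumes "finite A" "n \<notin> A"
  shows "walk_weight P (insert n A) i j (Suc m) =
         walk_weight P A i j (Suc m) +
         (\<Sum>t<m. walk_weight P A i n (Suc t) * walk_weight P (insert n A) n j (m - t))"
proof (induction m arbitrary: i)
  case 0 then show ?case by simp
next
  case (Suc m)
  have "walk_weight P (insert n A) i j (Suc (Suc m)) =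
        P i n * walk_weight P (insert n A) n j (Suc m) +
        (\<Sum>x\<in>A. P i x * walk_weight P (insert n A) x j (Suc m))"
    using assms by simp
  also have "(\<Sum>x\<in>A. P i x * walk_weight P (insert n A) x j (Suc m)) =
     walk_weight P A i j (Suc (Suc m)) +
     (\<Sum>t<m. walk_weight P A i n (Suc (Suc t)) * walk_weight P (insert n A) n j (m - t))"
    by (simp add: Suc distrib_left sum.distrib sum_distrib_left sum_distrib_right
        sum.swap[of _ A] mult.assoc)
  finally show ?case
    by (simp add: sum.lessThan_Suc_shift del: sum.lessThan_Suc)
qed

lemma walk_weight_insert_renewal:
  assumes "finite A" "n \<notin> A"
  shows "walk_weight P (insert n A) i j (Suc (Suc k)) =
         walk_weight P A i j (Suc (Suc k)) +
         (\<Sum>t\<le>k. walk_weight P A i n (Suc t) * walk_weight P (insert n A) n j (Suc (k - t)))"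
proof -
  have "walk_weight P (insert n A) i j (Suc (Suc k)) =
        walk_weight P A i j (Suc (Suc k)) +
        (\<Sum>t<Suc k. walk_weight P A i n (Suc t) * walk_weight P (insert n A) n j (Suc k - t))"
    by (rule walk_weight_insert[OF assms])
  also have "(\<Sum>t<Suc k. walk_weight P A i n (Suc t) * walk_weight P (insert n A) n j (Suc k - t)) =
        (\<Sum>t\<le>k. walk_weight P A i n (Suc t) * walk_weight P (insert n A) n j (Suc (k - t)))"
    by (rule sum.cong) (auto simp: Suc_diff_le)
  finally show ?thesis .
qed

lemma walk_weight_insert_sums:
  assumes P_nonneg: "\<forall>i\<in>S. \<forall>j\<in>S. 0 \<le> P i j"
    and A: "finite A" "n \<notin> A" "insert n A \<subseteq> S"
    and q: "\<And>i j. i \<in> S \<Longrightarrow> j \<in> S \<Longrightarrow> (\<lambda>k. walk_weight P A i j (Suc k)) sums q i j"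
    and q_nn: "q n n < 1" and i: "i \<in> S" and j: "j \<in> S"
  shows "(\<lambda>k. walk_weight P (insert n A) i j (Suc k)) sums (q i j + q i n * q n j / (1 - q n n))"
proof -
  have n: "n \<in> S" and AS: "A \<subseteq> S" using A by auto
  note W0 = walk_weight_nonneg[OF P_nonneg]
  note renewal = walk_weight_insert_renewal[OF A(1,2)]
  have from_n: "(\<lambda>k. walk_weight P (insert n A) n j (Suc k)) sums (q n j / (1 - q n n))"
  proof -
    have "summable (\<lambda>k. walk_weight P (insert n A) n j (Suc k))"
    proof (rule renewal_summable[where a="\<lambda>k. walk_weight P A n n (Suc k)" and c="q n n"
          and x="\<lambda>k. walk_weight P A n j (Suc k)"])
      show "(\<lambda>k. walk_weight P A n n (Suc k)) sums q n n" by (rule q[OF n n])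
      show "summable (\<lambda>k. walk_weight P A n j (Suc k))" using q[OF n j] by (simp add: sums_iff)
    qed (use W0 A AS n j q_nn renewal in auto)
    then obtain \<beta> where \<beta>: "(\<lambda>k. walk_weight P (insert n A) n j (Suc k)) sums \<beta>"
      by (auto simp: summable_def)
    have "(\<lambda>k. walk_weight P (insert n A) n j (Suc k)) sums (q n j + q n n * \<beta>)"
      by (rule renewal_sums[OF _ _ q[OF n n] \<beta> q[OF n j]]) (use W0 A AS n j renewal in auto)
    with \<beta> have "\<beta> = q n j + q n n * \<beta>" using sums_unique2 by blast
    then have "\<beta> = q n j / (1 - q n n)" using q_nn by (simp add: field_simps)
    with \<beta> show ?thesis by simp
  qed
  have "(\<lambda>k. walk_weight P (insert n A) i j (Suc k)) sums (q i j + q i n * (q n j / (1 - q n n)))"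
    by (rule renewal_sums[OF _ _ q[OF i n] from_n q[OF i j]]) (use W0 A AS n i j renewal in auto)
  then show ?thesis by simp
qed

lemma first_exit_paths_eq:
  fixes N :: nat
  assumes "1 \<le> n" "j \<in> {1..N}"
  shows "{xs. length xs = Suc m \<and> set xs \<subseteq> {1..N} \<and> set (butlast xs) \<inter> {1..<n} = {} \<and> last xs = j}
       = {xs. length xs = Suc m \<and> set (butlast xs) \<subseteq> {n..N} \<and> last xs = j}"
proof (intro Collect_cong)
  fix xs :: "nat list"
  show "(length xs = Suc m \<and> set xs \<subseteq> {1..N} \<and> set (butlast xs) \<inter> {1..<n} = {} \<and> last xs = j)
      \<longleftrightarrow> (length xs = Suc m \<and> set (butlast xs) \<subseteq> {n..N} \<and> last xs = j)"
  proof (cases "xs = []")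
    case False
    then show ?thesis using assms
      by (auto simp: set_eq_insert_last_butlast[OF False] subset_iff disjoint_iff)
  qed simp
qed

lemma exit_prob_eq_walk_weight:
  assumes "1 \<le> n" "j \<in> {1..N}"
  shows "exit_prob N P n j (Suc m) = walk_weight P {n..N} n j (Suc m)"
  unfolding exit_prob_def first_exit_paths_eq[OF assms]
  by (rule sum_path_prob_eq_walk_weight)

lemma visit_prob_eq_walk_weight:
  assumes "n \<in> {1..N}"
  shows "visit_prob N P n i (Suc m) = walk_weight P {n..N} i n (Suc m)"
proof -
  have paths_eq: "{xs. length xs = Suc m \<and> set xs \<subseteq> {1..N} \<and> set xs \<inter> {1..<n} = {} \<and> last xs = n}
      = {xs. length xs = Suc m \<and> set xs \<subseteq> {1..N} \<and> set (butlast xs) \<inter> {1..<n} = {} \<and> last xs = n}"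
  proof (intro Collect_cong)
    fix xs :: "nat list"
    show "(length xs = Suc m \<and> set xs \<subseteq> {1..N} \<and> set xs \<inter> {1..<n} = {} \<and> last xs = n)
      \<longleftrightarrow> (length xs = Suc m \<and> set xs \<subseteq> {1..N} \<and> set (butlast xs) \<inter> {1..<n} = {} \<and> last xs = n)"
    proof (cases "xs = []")
      case False
      then show ?thesis by (auto simp: set_eq_insert_last_butlast[OF False])
    qed simp
  qed
  have "1 \<le> n" using assms by simp
  show ?thesis
    unfolding visit_prob_def paths_eq first_exit_paths_eq[OF \<open>1 \<le> n\<close> assms]
    by (rule sum_path_prob_eq_walk_weight)
qed

lemma gth_N: "gth P N N = P"
  by (simp add: gth_def)

lemma gth_pred: "1 \<le> n \<Longrightarrow> n \<le> N \<Longrightarrow>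
   gth P N (n - 1) i j = gth P N n i j + gth P N n i n * gth P N n n j / gth_s P N n"
proof -
  assume "1 \<le> n" "n \<le> N"
  hence "N - (n - 1) = Suc (N - n)" "N - (N - n) = n" by auto
  thus ?thesis by (simp add: gth_def gth_s_def gth_step_def)
qed

lemma gth_telescope:
  assumes "d \<le> N"
  shows "gth P N (N - d) i j = P i j +
     (\<Sum>k\<in>{N - d<..N}. gth P N k i k * gth P N k k j / gth_s P N k)"
  using assms
proof (induction d)
  case 0 then show ?case by (simp add: gth_N)
next
  case (Suc d)
  have pred: "N - Suc d = N - d - 1" by simp
  have "{N - Suc d<..N} = insert (N - d) {N - d<..N}" using Suc.prems by auto
  then show ?case
    unfolding pred using gth_pred[of "N - d" N P i j] Suc by simp
qed

lemma sum_atLeastAtMost_split_last: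
  fixes n :: nat
  assumes "1 \<le> n"
  shows "(\<Sum>j=1..n. f j) = (\<Sum>j=1..<n. f j) + (f n :: 'a::comm_monoid_add)"
proof -
  have "{1..n} = insert n {1..<n}" using assms by auto
  then show ?thesis by (simp add: add.commute)
qed

definition pos_edges :: "nat \<Rightarrow> (nat \<Rightarrow> nat \<Rightarrow> real) \<Rightarrow> (nat \<times> nat) set" where
  "pos_edges N P = {(a, b). a \<in> {1..N} \<and> b \<in> {1..N} \<and> P a b > 0}"

locale irreducible_stochastic =
  fixes N :: nat and P :: "nat \<Rightarrow> nat \<Rightarrow> real"
  assumes stochastic: "stochastic_matrix N P"
    and irreducible: "irreducible_matrix N P"
begin

lemma nonneg: "\<forall>i\<in>{1..N}. \<forall>j\<in>{1..N}. 0 \<le> P i j"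
  using stochastic by (simp add: stochastic_matrix_def)

lemma connected: "i \<in> {1..N} \<Longrightarrow> j \<in> {1..N} \<Longrightarrow> (i, j) \<in> (pos_edges N P)\<^sup>+"
  using irreducible by (simp add: irreducible_matrix_def pos_edges_def)

lemma walk_weight_nonneg': "A \<subseteq> {1..N} \<Longrightarrow> i \<in> {1..N} \<Longrightarrow> j \<in> {1..N} \<Longrightarrow> 0 \<le> walk_weight P A i j m"
  by (rule walk_weight_nonneg[OF nonneg])

text \<open>Induction along a positive path; the walk is restarted at n whenever the path passes n.\<close>

lemma positive_walk_to_lower:
  assumes n: "n \<le> N" and cb: "(c, b) \<in> (pos_edges N P)\<^sup>+" and b: "b \<in> {1..<n}"
  shows "(\<exists>j\<in>{1..<n}. \<exists>m. 0 < walk_weight P {Suc n..N} c j (Suc m)) \<or>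
         (\<exists>j\<in>{1..<n}. \<exists>m. 0 < walk_weight P {Suc n..N} n j (Suc m))"
  using cb
proof (induction rule: converse_trancl_induct)
  case (base y)
  hence "0 < walk_weight P {Suc n..N} y b (Suc 0)" by (simp add: pos_edges_def)
  then show ?case using b by blast
next
  case (step c d)
  have cd: "c \<in> {1..N}" "d \<in> {1..N}" "0 < P c d" using step.hyps(1) by (auto simp: pos_edges_def)
  show ?case using step.IH
  proof
    assume "\<exists>j\<in>{1..<n}. \<exists>m. 0 < walk_weight P {Suc n..N} d j (Suc m)"
    then obtain j m where j: "j \<in> {1..<n}" and pos: "0 < walk_weight P {Suc n..N} d j (Suc m)"
      by auto
    consider "d < n" | "d = n" | "d > n" by linarith
    then show ?case
    proof cases
      case 1
      then show ?thesis using cd by (intro disjI1 bexI[of _ d] exI[of _ 0]) auto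
    next
      case 2
      then show ?thesis using j pos by auto
    next
      case 3
      hence dA: "d \<in> {Suc n..N}" using cd by auto
      have "0 < P c d * walk_weight P {Suc n..N} d j (Suc m)" using cd pos by simp
      also have "\<dots> \<le> (\<Sum>x\<in>{Suc n..N}. P c x * walk_weight P {Suc n..N} x j (Suc m))"
        using nonneg cd j n
        by (intro member_le_sum[OF dA] mult_nonneg_nonneg walk_weight_nonneg') auto
      finally show ?thesis using j by (intro disjI1 bexI[OF _ j] exI[of _ "Suc m"]) simp
    qed
  qed simp
qed

definition gth_invariant :: "nat \<Rightarrow> bool" where
  "gth_invariant n \<longleftrightarrow>
     (\<forall>i\<in>{1..N}. \<forall>j\<in>{1..N}. (\<lambda>k. walk_weight P {Suc n..N} i j (Suc k)) sums gth P N n i j)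
   \<and> (\<forall>i\<in>{1..N}. (\<Sum>j=1..n. gth P N n i j) = 1)"

lemma gth_invariant_nonneg:
  assumes "gth_invariant n" "i \<in> {1..N}" "j \<in> {1..N}"
  shows "0 \<le> gth P N n i j"
proof (rule sums_le[OF _ sums_zero])
  show "(\<lambda>k. walk_weight P {Suc n..N} i j (Suc k)) sums gth P N n i j"
    using assms by (auto simp: gth_invariant_def)
  show "0 \<le> walk_weight P {Suc n..N} i j (Suc k)" for k
    using assms(2,3) by (intro walk_weight_nonneg') auto
qed

lemma gth_invariant_s_pos:
  assumes I: "gth_invariant n" and n: "2 \<le> n" "n \<le> N"
  shows "0 < gth_s P N n"
proof -
  have "(n, 1) \<in> (pos_edges N P)\<^sup>+" using n by (intro connected) auto
  from positive_walk_to_lower[OF n(2) this] n obtain j m where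
    j: "j \<in> {1..<n}" and pos: "0 < walk_weight P {Suc n..N} n j (Suc m)"
    by auto
  have "(\<lambda>k. walk_weight P {Suc n..N} n j (Suc k)) sums gth P N n n j"
    using I j n by (auto simp: gth_invariant_def)
  moreover have "0 \<le> walk_weight P {Suc n..N} n j (Suc k)" for k
    using j n by (intro walk_weight_nonneg') auto
  ultimately have "0 < gth P N n n j"
    using suminf_pos2[of "\<lambda>k. walk_weight P {Suc n..N} n j (Suc k)" m] pos by (auto simp: sums_iff)
  also have "gth P N n n j \<le> gth_s P N n"
    unfolding gth_s_def using gth_invariant_nonneg[OF I] j n by (intro member_le_sum[OF j]) auto
  finally show ?thesis .
qed

lemma gth_invariant_diag:
  assumes "gth_invariant n" "1 \<le> n" "n \<le> N"
  shows "gth P N n n n = 1 - gth_s P N n"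
  using assms sum_atLeastAtMost_split_last[of n "gth P N n n"]
  by (auto simp: gth_invariant_def gth_s_def)

lemma gth_invariant_pred:
  assumes I: "gth_invariant n" and n: "2 \<le> n" "n \<le> N"
  shows "gth_invariant (n - 1)"
proof -
  define p where "p = gth P N n"
  define s where "s = gth_s P N n"
  have s_pos: "0 < s" unfolding s_def by (rule gth_invariant_s_pos[OF I n])
  have s_sum: "s = (\<Sum>j=1..<n. p n j)" by (simp add: s_def p_def gth_s_def)
  have p_nn: "p n n = 1 - s" unfolding p_def s_def by (rule gth_invariant_diag[OF I]) (use n in auto)
  have p_sums: "(\<lambda>k. walk_weight P {Suc n..N} i j (Suc k)) sums p i j" if "i \<in> {1..N}" "j \<in> {1..N}" for i j
    using I that by (simp add: gth_invariant_def p_def)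
  have walks: "(\<lambda>k. walk_weight P {Suc (n - 1)..N} i j (Suc k)) sums gth P N (n - 1) i j"
    if "i \<in> {1..N}" "j \<in> {1..N}" for i j
  proof -
    have "{Suc (n - 1)..N} = insert n {Suc n..N}" using n by auto
    moreover have "(\<lambda>k. walk_weight P (insert n {Suc n..N}) i j (Suc k)) sums
        (p i j + p i n * p n j / (1 - p n n))"
      using n that s_pos p_nn by (intro walk_weight_insert_sums[OF nonneg _ _ _ p_sums]) auto
    moreover have "p i j + p i n * p n j / (1 - p n n) = gth P N (n - 1) i j"
      using gth_pred[of n N P i j] n unfolding p_nn by (simp add: p_def s_def)
    ultimately show ?thesis by simp
  qed
  have rows: "(\<Sum>j=1..n-1. gth P N (n - 1) i j) = 1" if i: "i \<in> {1..N}" for i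
  proof -
    have "{1..n-1} = {1..<n}" using n by auto
    then have "(\<Sum>j=1..n-1. gth P N (n - 1) i j) = (\<Sum>j=1..<n. p i j + p i n * p n j / s)"
      using gth_pred[of n N P i] n by (simp add: p_def s_def)
    also have "\<dots> = (\<Sum>j=1..<n. p i j) + p i n * s / s"
      using s_sum by (simp add: sum.distrib sum_divide_distrib[symmetric] sum_distrib_left[symmetric])
    also have "\<dots> = (\<Sum>j=1..n. p i j)"
      using s_pos sum_atLeastAtMost_split_last[of n "p i"] n by simp
    also have "\<dots> = 1" using I i by (simp add: gth_invariant_def p_def)
    finally show ?thesis .
  qed
  show ?thesis unfolding gth_invariant_def using walks rows by auto
qed

lemma gth_invariant_holds:
  assumes "1 \<le> n" "n \<le> N"
  shows "gth_invariant n"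
proof -
  have "gth_invariant (N - d)" if "d < N" for d
    using that
  proof (induction d)
    case 0
    have "(\<lambda>k. walk_weight P {Suc N..N} i j (Suc k)) sums P i j" for i j
    proof -
      have "(\<lambda>k. walk_weight P {Suc N..N} i j (Suc k)) = (\<lambda>k. if k = 0 then P i j else 0)"
      proof
        show "walk_weight P {Suc N..N} i j (Suc k) = (if k = 0 then P i j else 0)" for k
          by (cases k) auto
      qed
      then show ?thesis using sums_single[of 0 "\<lambda>_. P i j"] by simp
    qed
    then show ?case
      using stochastic by (simp add: gth_invariant_def gth_N stochastic_matrix_def)
  next
    case (Suc d)
    have "gth_invariant (N - d - 1)"
      by (rule gth_invariant_pred[OF Suc.IH]) (use Suc.prems in auto)
    then show ?case by simp
  qed
  from this[of "N - n"] assms show ?thesis by simp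
qed

lemma gth_walk_sums:
  assumes "1 \<le> n" "n \<le> N" "i \<in> {1..N}" "j \<in> {1..N}"
  shows "(\<lambda>k. walk_weight P {Suc n..N} i j (Suc k)) sums gth P N n i j"
  using gth_invariant_holds[of n] assms by (simp add: gth_invariant_def)

lemma gth_s_pos: "n \<in> {2..N} \<Longrightarrow> 0 < gth_s P N n"
  using gth_invariant_s_pos gth_invariant_holds by auto

lemma gth_diag: "n \<in> {1..N} \<Longrightarrow> gth P N n n n = 1 - gth_s P N n"
  using gth_invariant_diag gth_invariant_holds by auto

lemma gth_one_one_one:
  assumes "1 \<le> N"
  shows "gth P N 1 1 1 = 1"
  using gth_invariant_holds[of 1] assms by (simp add: gth_invariant_def)

lemma gth_pred_eliminated:
  assumes n: "n \<in> {2..N}" and ij: "i = n \<or> j = n"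
  shows "gth P N (n - 1) i j = gth P N n i j / gth_s P N n"
proof -
  have pred: "gth P N (n - 1) i j = gth P N n i j + gth P N n i n * gth P N n n j / gth_s P N n"
    using gth_pred[of n N P i j] n by auto
  have diag: "gth P N n n n = 1 - gth_s P N n" and s: "0 < gth_s P N n"
    using gth_diag gth_s_pos n by auto
  from ij show ?thesis
    using pred s by (elim disjE) (simp_all add: diag field_simps)
qed

lemma r_visits_eq:
  assumes n: "n \<in> {2..N}" and i: "i \<in> {1..n-1}"
  shows "r_visits N P i n = gth P N n i n / gth_s P N n"
proof -
  have "(\<lambda>k. walk_weight P {n..N} i n (Suc k)) sums gth P N (n - 1) i n"
    using gth_walk_sums[of "n - 1" i n] n i by auto
  moreover have "visit_prob N P n i (Suc k) = walk_weight P {n..N} i n (Suc k)" for k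
    using visit_prob_eq_walk_weight n by auto
  ultimately have "r_visits N P i n = gth P N (n - 1) i n"
    unfolding r_visits_def by (simp add: sums_iff)
  then show ?thesis using gth_pred_eliminated[OF n] by simp
qed

lemma g_exit_eq:
  assumes n: "n \<in> {2..N}" and j: "j \<in> {1..n-1}"
  shows "g_exit N P n j = gth P N n n j / gth_s P N n"
proof -
  have "(\<lambda>k. walk_weight P {n..N} n j (Suc k)) sums gth P N (n - 1) n j"
    using gth_walk_sums[of "n - 1" n j] n j by auto
  moreover have "exit_prob N P n j (Suc k) = walk_weight P {n..N} n j (Suc k)" for k
    using exit_prob_eq_walk_weight[of n j N] n j by auto
  ultimately have "g_exit N P n j = gth P N (n - 1) n j"
    unfolding g_exit_def by (simp add: sums_iff)
  then show ?thesis using gth_pred_eliminated[OF n] by simp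
qed

definition ldu_term :: "nat \<Rightarrow> nat \<Rightarrow> nat \<Rightarrow> real" where
  "ldu_term i j k = (idm i k - R_U N P i k) * (1 - gth P N k k k) * (idm k j - G_L N P k j)"

lemma matmul_ldu_eq_sum:
  "matmul N (matmul N (\<lambda>a b. idm a b - R_U N P a b) (\<lambda>a b. idm a b - Psi_D N P a b))
     (\<lambda>a b. idm a b - G_L N P a b) i j = (\<Sum>k=1..N. ldu_term i j k)"
proof -
  have diagonal: "(\<Sum>l=1..N. (idm i l - R_U N P i l) * (idm l k - Psi_D N P l k)) =
      (idm i k - R_U N P i k) * (1 - gth P N k k k)" if "k \<in> {1..N}" for k
  proof -
    have "(idm i l - R_U N P i l) * (idm l k - Psi_D N P l k) =
        (if l = k then (idm i k - R_U N P i k) * (1 - gth P N k k k) else 0)" for l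
      by (auto simp: idm_def Psi_D_def)
    then show ?thesis using that by simp
  qed
  show ?thesis
    unfolding matmul_def ldu_term_def by (intro sum.cong refl) (simp only: diagonal)
qed

lemma ldu_term_below: "k < max i j \<Longrightarrow> ldu_term i j k = 0"
  by (auto simp: ldu_term_def idm_def R_U_def G_L_def)

lemma ldu_term_above:
  assumes "max i j < k" "k \<le> N" "1 \<le> i" "1 \<le> j"
  shows "ldu_term i j k = gth P N k i k * gth P N k k j / gth_s P N k"
proof -
  have k: "k \<in> {2..N}" "i \<in> {1..k-1}" "j \<in> {1..k-1}" using assms by auto
  have "ldu_term i j k =
      (- (gth P N k i k / gth_s P N k)) * gth_s P N k * (- (gth P N k k j / gth_s P N k))"
    using assms r_visits_eq[OF k(1,2)] g_exit_eq[OF k(1,3)] gth_diag[of k] k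
    by (simp add: ldu_term_def idm_def R_U_def G_L_def)
  then show ?thesis using gth_s_pos[OF k(1)] by (simp add: field_simps)
qed

lemma ldu_term_max:
  assumes "i \<in> {1..N}" "j \<in> {1..N}"
  shows "ldu_term i j (max i j) = idm i j - gth P N (max i j) i j"
proof -
  consider "i = j" | "i < j" | "j < i" by linarith
  then show ?thesis
  proof cases
    case 1
    then show ?thesis by (simp add: ldu_term_def idm_def R_U_def G_L_def)
  next
    case 2
    then have j: "j \<in> {2..N}" "i \<in> {1..j-1}" using assms by auto
    then show ?thesis
      using 2 r_visits_eq[OF j] gth_diag[of j] gth_s_pos[OF j(1)]
      by (simp add: ldu_term_def idm_def R_U_def G_L_def max_def)
  next
    case 3
    then have i: "i \<in> {2..N}" "j \<in> {1..i-1}" using assms by auto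
    then show ?thesis
      using 3 g_exit_eq[OF i] gth_diag[of i] gth_s_pos[OF i(1)]
      by (simp add: ldu_term_def idm_def R_U_def G_L_def max_def)
  qed
qed

lemma ldu_factorization:
  assumes i: "i \<in> {1..N}" and j: "j \<in> {1..N}"
  shows "idm i j - P i j =
    matmul N (matmul N (\<lambda>a b. idm a b - R_U N P a b) (\<lambda>a b. idm a b - Psi_D N P a b))
      (\<lambda>a b. idm a b - G_L N P a b) i j"
proof -
  define m where "m = max i j"
  have m: "m \<in> {1..N}" using i j by (auto simp: m_def)
  have split: "{1..N} = {1..<m} \<union> insert m {m<..N}" using m by auto
  have "(\<Sum>k=1..N. ldu_term i j k) =
      (\<Sum>k\<in>{1..<m}. ldu_term i j k) + (\<Sum>k\<in>insert m {m<..N}. ldu_term i j k)"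
    unfolding split by (rule sum.union_disjoint) auto
  also have "\<dots> = (\<Sum>k\<in>{1..<m}. ldu_term i j k) + (ldu_term i j m + (\<Sum>k\<in>{m<..N}. ldu_term i j k))"
    by simp
  also have "\<dots> = idm i j - gth P N m i j + (\<Sum>k\<in>{m<..N}. gth P N k i k * gth P N k k j / gth_s P N k)"
    using ldu_term_below ldu_term_above ldu_term_max[OF i j] i j by (simp add: m_def)
  also have "\<dots> = idm i j - P i j"
    using gth_telescope[of "N - m" N P i j] m by simp
  finally show ?thesis by (simp add: matmul_ldu_eq_sum)
qed

end

theorem mainTheorem3:
  fixes N :: nat and P :: "nat \<Rightarrow> nat \<Rightarrow> real"
  assumes "N \<ge> 1"
    and "stochastic_matrix N P"
    and "irreducible_matrix N P"
  shows "(\<forall>n\<in>{2..N}. \<forall>i\<in>{1..n-1}. r_visits N P i n = gth P N n i n / gth_s P N n)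
       \<and> (\<forall>n\<in>{2..N}. \<forall>j\<in>{1..n-1}. g_exit N P n j = gth P N n n j / gth_s P N n)
       \<and> gth P N 1 1 1 = 1
       \<and> (\<forall>i\<in>{1..N}. \<forall>j\<in>{1..N}.
            idm i j - P i j =
            matmul N (matmul N (\<lambda>a b. idm a b - R_U N P a b) (\<lambda>a b. idm a b - Psi_D N P a b))
                     (\<lambda>a b. idm a b - G_L N P a b) i j)"
proof -
  interpret irreducible_stochastic N P
    using assms(2,3) by unfold_locales
  show ?thesis
    using r_visits_eq g_exit_eq gth_one_one_one[OF assms(1)] ldu_factorization by blast
qed

end
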